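(* Let $X$ be a real normed linear space, let $\Omega_1,\Omega_2\subset X$ be convex, and let $\bar x\in\Omega_1\cap\Omega_2$. Suppose there exists a bounded convex neighborhood $V$ of $\bar x$ such that $$0\in\operatorname{int}\big(\Omega_1-(\Omega_2\cap V)\big).$$ Then $$N(\bar x;\Omega_1\cap\Omega_2)=N(\bar x;\Omega_1)+N(\bar x;\Omega_2).$$
   Context: For a convex set $\Omega\subset X$ and $\bar x\in\Omega$, the normal cone is $N(\bar x;\Omega)=\{x^*\in X^*\mid \langle x^*,x-\bar x\rangle\le0\ \forall x\in\Omega\}$, where $X^*$ is the topological dual of $X$. For sets $A,B$, $A-B=\{a-b\mid a\in A,b\in B\}$; $\operatorname{int}$ is the topological interior. *)

theory Defs
  imports "HOL-Analysis.Analysis"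
begin

text \<open>Topological dual of a real normed space: continuous (= bounded) linear functionals,
  represented as functions into real satisfying bounded_linear.\<close>

definition normal_cone :: "'a::real_normed_vector \<Rightarrow> 'a set \<Rightarrow> ('a \<Rightarrow> real) set" where
  "normal_cone xbar \<Omega> =
     {xs. bounded_linear xs \<and> (\<forall>x\<in>\<Omega>. xs (x - xbar) \<le> 0)}"

end

theory Submission
  imports Defs
begin

text \<open>
  Given \<open>x\<^sup>*\<close> normal to \<open>\<Omega>\<^sub>1 \<inter> \<Omega>\<^sub>2\<close> at \<open>xbar\<close>, consider the convex cone \<open>K\<close>
  generated by the pairs \<open>(a - b, x\<^sup>*(a - xbar))\<close> with \<open>a \<in> \<Omega>\<^sub>1\<close>, \<open>b \<in> \<Omega>\<^sub>2\<close>. The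
  qualification condition makes \<open>\<Omega>\<^sub>1 - \<Omega>\<^sub>2\<close> absorbing, so \<open>K\<close> projects onto \<open>X\<close>,
  and normality gives \<open>v \<le> 0\<close> whenever \<open>(0, v) \<in> K\<close>. Hence \<open>z \<mapsto> sup {v. (z, v) \<in> K}\<close>
  is finite and superlinear, and the algebraic Hahn-Banach theorem yields a linear \<open>g\<close>
  with \<open>x\<^sup>*(a - xbar) \<le> g (a - b)\<close>. Taking \<open>b\<close> in the bounded set \<open>V\<close> bounds \<open>g\<close> from
  below on a ball, so \<open>g\<close> is continuous; then \<open>g \<in> N(xbar; \<Omega>\<^sub>2)\<close> and
  \<open>x\<^sup>* - g \<in> N(xbar; \<Omega>\<^sub>1)\<close>.
\<close>

definition sublinear :: "('a::real_vector \<Rightarrow> real) \<Rightarrow> bool" where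
  "sublinear p \<longleftrightarrow> (\<forall>x y. p (x + y) \<le> p x + p y) \<and> (\<forall>t x. 0 < t \<longrightarrow> p (t *\<^sub>R x) = t * p x)"

definition dominated_linear_graph :: "('a::real_vector \<Rightarrow> real) \<Rightarrow> ('a \<times> real) set \<Rightarrow> bool" where
  "dominated_linear_graph p G \<longleftrightarrow> subspace G \<and> (\<forall>x y y'. (x, y) \<in> G \<longrightarrow> (x, y') \<in> G \<longrightarrow> y = y')
     \<and> (\<forall>(x, y) \<in> G. y \<le> p x)"

lemma dominated_linear_graph_Union_chain:
  assumes "C \<noteq> {}" and "subset.chain {G. dominated_linear_graph p G} C"
  shows "dominated_linear_graph p (\<Union>C)"
proof -
  have dom: "\<And>G. G \<in> C \<Longrightarrow> dominated_linear_graph p G"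
    and ch: "\<And>G H. G \<in> C \<Longrightarrow> H \<in> C \<Longrightarrow> G \<subseteq> H \<or> H \<subseteq> G"
    using assms(2) by (auto simp: subset.chain_def)
  have common: "\<exists>G\<in>C. u \<in> G \<and> v \<in> G" if "u \<in> \<Union>C" "v \<in> \<Union>C" for u v
    using that ch by blast
  have "subspace (\<Union>C)"
    unfolding subspace_def
  proof (intro conjI ballI allI)
    show "0 \<in> \<Union>C"
      using assms(1) dom by (fastforce simp: dominated_linear_graph_def subspace_0)
    show "u + v \<in> \<Union>C" if "u \<in> \<Union>C" "v \<in> \<Union>C" for u v
      using common[OF that] dom by (meson UnionI dominated_linear_graph_def subspace_add)
    show "c *\<^sub>R u \<in> \<Union>C" if "u \<in> \<Union>C" for c u
      using that dom by (meson UnionE UnionI dominated_linear_graph_def subspace_scale)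
  qed
  moreover have "y = y'" if "(x, y) \<in> \<Union>C" "(x, y') \<in> \<Union>C" for x y y'
    using common[OF that] dom unfolding dominated_linear_graph_def by blast
  moreover have "y \<le> p x" if "(x, y) \<in> \<Union>C" for x y
    using that dom unfolding dominated_linear_graph_def by blast
  ultimately show ?thesis
    unfolding dominated_linear_graph_def by blast
qed

lemma dominated_linear_graph_gap:
  assumes "sublinear p" and "dominated_linear_graph p G"
  obtains c where "\<And>u y. (u, y) \<in> G \<Longrightarrow> y - p (u - x) \<le> c"
    and "\<And>v y. (v, y) \<in> G \<Longrightarrow> c \<le> p (v + x) - y"
proof -
  define S where "S = {y - p (u - x) | u y. (u, y) \<in> G}"
  have "(0, 0) \<in> G"
    using assms(2) subspace_0 by (fastforce simp: dominated_linear_graph_def zero_prod_def)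
  then have "S \<noteq> {}"
    unfolding S_def by blast
  have below: "y - p (u - x) \<le> p (v + x) - y'" if "(u, y) \<in> G" "(v, y') \<in> G" for u y v y'
  proof -
    have "(u + v, y + y') \<in> G"
      using assms(2) that subspace_add[of G "(u, y)" "(v, y')"] by (simp add: dominated_linear_graph_def)
    then have "y + y' \<le> p ((u - x) + (v + x))"
      using assms(2) by (auto simp: dominated_linear_graph_def)
    also have "\<dots> \<le> p (u - x) + p (v + x)"
      using assms(1) unfolding sublinear_def by blast
    finally show ?thesis by simp
  qed
  have "bdd_above S"
    unfolding S_def bdd_above_def using below[OF _ \<open>(0, 0) \<in> G\<close>] by blast
  show thesis
  proof
    show "y - p (u - x) \<le> Sup S" if "(u, y) \<in> G" for u y
      using that \<open>bdd_above S\<close> by (auto intro!: cSup_upper simp: S_def)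
    show "Sup S \<le> p (v + x) - y" if "(v, y) \<in> G" for v y
      using \<open>S \<noteq> {}\<close> below[OF _ that] by (auto intro!: cSup_least simp: S_def)
  qed
qed

lemma sublinear_scaleR:
  "sublinear p \<Longrightarrow> 0 < t \<Longrightarrow> p (t *\<^sub>R x) = t * p x"
  by (simp add: sublinear_def)

lemma dominated_linear_graph_scaleR:
  "dominated_linear_graph p G \<Longrightarrow> (u, y) \<in> G \<Longrightarrow> (k *\<^sub>R u, k * y) \<in> G"
  using subspace_scale[of G "(u, y)" k] by (simp add: dominated_linear_graph_def)

lemma dominated_linear_graph_adjoin_bound:
  assumes p: "sublinear p" and G: "dominated_linear_graph p G"
    and lower: "\<And>u y. (u, y) \<in> G \<Longrightarrow> y - p (u - x) \<le> c"
    and upper: "\<And>v y. (v, y) \<in> G \<Longrightarrow> c \<le> p (v + x) - y"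
    and uy: "(u, y) \<in> G"
  shows "y + t * c \<le> p (u + t *\<^sub>R x)"
proof (cases t "0::real" rule: linorder_cases)
  case equal
  then show ?thesis
    using G uy by (auto simp: dominated_linear_graph_def)
next
  case greater
  have "c \<le> p ((1 / t) *\<^sub>R u + x) - (1 / t) * y"
    using upper[OF dominated_linear_graph_scaleR[OF G uy]] .
  then have "t * c \<le> t * (p ((1 / t) *\<^sub>R u + x) - (1 / t) * y)"
    using greater by (simp add: mult_left_mono)
  also have "\<dots> = t * p ((1 / t) *\<^sub>R u + x) - y"
    using greater by (simp add: algebra_simps)
  also have "t * p ((1 / t) *\<^sub>R u + x) = p (u + t *\<^sub>R x)"
    using greater by (simp add: sublinear_scaleR[OF p, symmetric] scaleR_add_right)
  finally show ?thesis by simp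
next
  case less
  define s where "s = - t"
  have "s > 0"
    using less by (simp add: s_def)
  have "(1 / s) * y - p ((1 / s) *\<^sub>R u - x) \<le> c"
    using lower[OF dominated_linear_graph_scaleR[OF G uy]] .
  then have "y - s * p ((1 / s) *\<^sub>R u - x) \<le> s * c"
    using \<open>s > 0\<close> by (simp add: mult_left_mono right_diff_distrib[symmetric] field_simps)
  also have "s * p ((1 / s) *\<^sub>R u - x) = p (s *\<^sub>R ((1 / s) *\<^sub>R u - x))"
    using sublinear_scaleR[OF p \<open>s > 0\<close>] by simp
  also have "s *\<^sub>R ((1 / s) *\<^sub>R u - x) = u + t *\<^sub>R x"
    using \<open>s > 0\<close> by (simp add: s_def algebra_simps)
  finally show ?thesis
    by (simp add: s_def)
qed

lemma dominated_linear_graph_adjoin: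
  assumes p: "sublinear p" and G: "dominated_linear_graph p G"
    and x: "\<And>y. (x, y) \<notin> G"
    and lower: "\<And>u y. (u, y) \<in> G \<Longrightarrow> y - p (u - x) \<le> c"
    and upper: "\<And>v y. (v, y) \<in> G \<Longrightarrow> c \<le> p (v + x) - y"
  shows "dominated_linear_graph p {g + h | g h. g \<in> G \<and> h \<in> span {(x, c)}}"
    (is "dominated_linear_graph p ?G'")
proof -
  have sub: "subspace G"
    using G by (simp add: dominated_linear_graph_def)
  have elem: "\<exists>u y t. (u, y) \<in> G \<and> z = (u + t *\<^sub>R x, y + t * c)" if "z \<in> ?G'" for z
    using that by (force simp: span_singleton)
  have "y1 = y2" if y1: "(v, y1) \<in> ?G'" and y2: "(v, y2) \<in> ?G'" for v y1 y2
  proof -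
    obtain u1 z1 t1 u2 z2 t2 where in_G: "(u1, z1) \<in> G" "(u2, z2) \<in> G"
      and eq: "v = u1 + t1 *\<^sub>R x" "y1 = z1 + t1 * c" "v = u2 + t2 *\<^sub>R x" "y2 = z2 + t2 * c"
      using elem[OF y1] elem[OF y2] by blast
    have "t1 = t2"
    proof (rule ccontr)
      assume "t1 \<noteq> t2"
      have "(u2 - u1, z2 - z1) \<in> G"
        using subspace_diff[OF sub in_G(2,1)] by simp
      then have "((1 / (t1 - t2)) *\<^sub>R (u2 - u1), (1 / (t1 - t2)) * (z2 - z1)) \<in> G"
        by (rule dominated_linear_graph_scaleR[OF G])
      moreover have "u2 - u1 = (t1 - t2) *\<^sub>R x"
        using eq by (simp add: algebra_simps)
      ultimately show False
        using x \<open>t1 \<noteq> t2\<close> by simp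
    qed
    then have "z1 = z2"
      using G in_G eq by (auto simp: dominated_linear_graph_def)
    then show ?thesis
      using eq \<open>t1 = t2\<close> by simp
  qed
  moreover have "y \<le> p v" if "(v, y) \<in> ?G'" for v y
    using elem[OF that] dominated_linear_graph_adjoin_bound[OF p G lower upper] by auto
  ultimately show ?thesis
    using subspace_sums[OF sub subspace_span] by (auto simp: dominated_linear_graph_def)
qed

lemma maximal_dominated_linear_graph_total:
  assumes p: "sublinear p" and M: "dominated_linear_graph p M"
    and maximal: "\<And>G. dominated_linear_graph p G \<Longrightarrow> M \<subseteq> G \<Longrightarrow> G = M"
  shows "\<exists>y. (x, y) \<in> M"
proof (rule ccontr)
  assume x: "\<nexists>y. (x, y) \<in> M"
  obtain c where lower: "\<And>u y. (u, y) \<in> M \<Longrightarrow> y - p (u - x) \<le> c"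
    and upper: "\<And>v y. (v, y) \<in> M \<Longrightarrow> c \<le> p (v + x) - y"
    using dominated_linear_graph_gap[OF p M, where x = x] by blast
  define G where "G = {g + h | g h. g \<in> M \<and> h \<in> span {(x, c)}}"
  have "dominated_linear_graph p G"
    unfolding G_def using dominated_linear_graph_adjoin[OF p M _ lower upper] x by blast
  moreover have "M \<subseteq> G"
  proof
    fix g assume "g \<in> M"
    moreover have "g = g + 0" "0 \<in> span {(x, c)}"
      by (simp_all add: span_zero)
    ultimately show "g \<in> G"
      unfolding G_def by blast
  qed
  moreover have "(x, c) \<in> G"
  proof -
    have "0 \<in> M" "(x, c) = 0 + (x, c)" "(x, c) \<in> span {(x, c)}"
      using M by (simp_all add: dominated_linear_graph_def subspace_0 span_base)
    then show ?thesis
      unfolding G_def by blast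
  qed
  ultimately show False
    using maximal x by blast
qed

theorem hahn_banach_sublinear:
  assumes p: "sublinear p"
  obtains L where "linear L" and "\<And>x. L x \<le> p x"
proof -
  have "p 0 = 0"
    using sublinear_scaleR[OF p, of 2 0] by simp
  moreover have "subspace {0 :: 'a \<times> real}"
    by simp
  ultimately have "dominated_linear_graph p {0}"
    by (auto simp: dominated_linear_graph_def zero_prod_def)
  then have "\<exists>M\<in>{G. dominated_linear_graph p G}. \<forall>G\<in>{G. dominated_linear_graph p G}. M \<subseteq> G \<longrightarrow> G = M"
    by (intro subset_Zorn_nonempty) (auto intro: dominated_linear_graph_Union_chain)
  then obtain M where M: "dominated_linear_graph p M"
    and maximal: "\<And>G. dominated_linear_graph p G \<Longrightarrow> M \<subseteq> G \<Longrightarrow> G = M"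
    by blast
  have unique: "y = y'" if "(x, y) \<in> M" "(x, y') \<in> M" for x y y'
    using M that by (simp add: dominated_linear_graph_def)
  define L where "L x = (THE y. (x, y) \<in> M)" for x
  have graph: "(x, L x) \<in> M" for x
  proof -
    obtain y where y: "(x, y) \<in> M"
      using maximal_dominated_linear_graph_total[OF p M maximal] by blast
    moreover have "L x = y"
      unfolding L_def using y unique by (intro the_equality)
    ultimately show ?thesis
      by simp
  qed
  have "linear L"
  proof (rule linearI)
    show "L (u + v) = L u + L v" for u v
    proof -
      have "(u + v, L u + L v) \<in> M"
        using M graph subspace_add[of M "(u, L u)" "(v, L v)"] by (simp add: dominated_linear_graph_def)
      then show ?thesis
        using unique graph by blast
    qed
    show "L (k *\<^sub>R u) = k *\<^sub>R L u" for k u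
      using unique[OF graph dominated_linear_graph_scaleR[OF M graph]] by simp
  qed
  moreover have "L x \<le> p x" for x
    using M graph[of x] unfolding dominated_linear_graph_def by blast
  ultimately show thesis
    using that by blast
qed

lemma convex_cone_add_pair:
  "convex K \<Longrightarrow> cone K \<Longrightarrow> (z1, v1) \<in> K \<Longrightarrow> (z2, v2) \<in> K \<Longrightarrow> (z1 + z2, v1 + v2) \<in> K"
  using convex_cone[of K] by fastforce

lemma bdd_above_convex_cone_fibre:
  fixes K :: "('a::real_vector \<times> real) set"
  assumes "convex K" and "cone K" and onto: "fst ` K = UNIV"
    and nonpos: "\<And>v. (0, v) \<in> K \<Longrightarrow> v \<le> 0"
  shows "bdd_above {v. (z, v) \<in> K}"
proof -
  have "- z \<in> fst ` K"
    using onto by simp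
  then obtain v' where v': "(- z, v') \<in> K"
    by force
  have "v \<le> - v'" if "(z, v) \<in> K" for v
    using nonpos convex_cone_add_pair[OF assms(1,2) that v'] by fastforce
  then show ?thesis
    by (auto simp: bdd_above_def)
qed

lemma sublinear_neg_Sup_convex_cone:
  fixes K :: "('a::real_vector \<times> real) set"
  assumes "convex K" and "cone K" and onto: "fst ` K = UNIV"
    and nonpos: "\<And>v. (0, v) \<in> K \<Longrightarrow> v \<le> 0"
  shows "sublinear (\<lambda>z. - Sup {v. (z, v) \<in> K})"
proof -
  define s where "s z = Sup {v. (z, v) \<in> K}" for z
  have scale: "(c *\<^sub>R z, c * v) \<in> K" if "(z, v) \<in> K" "c \<ge> 0" for z v c
    using that assms(2) by (fastforce simp: cone_def)
  have nonempty: "{v. (z, v) \<in> K} \<noteq> {}" for z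
    using onto by (metis (mono_tags, lifting) UNIV_I empty_Collect_eq fst_conv image_iff prod.collapse)
  have upper: "v \<le> s z" if "(z, v) \<in> K" for z v
    unfolding s_def using that bdd_above_convex_cone_fibre[OF assms] by (intro cSup_upper) auto
  have least: "s z \<le> c" if "\<And>v. (z, v) \<in> K \<Longrightarrow> v \<le> c" for z c
    unfolding s_def using nonempty that by (intro cSup_least) auto
  have superadditive: "s z1 + s z2 \<le> s (z1 + z2)" for z1 z2
  proof -
    have "v1 + v2 \<le> s (z1 + z2)" if "(z1, v1) \<in> K" "(z2, v2) \<in> K" for v1 v2
      using upper[OF convex_cone_add_pair[OF assms(1,2) that]] .
    then have "s z1 + v2 \<le> s (z1 + z2)" if "(z2, v2) \<in> K" for v2
      using least[of z1 "s (z1 + z2) - v2"] that by (simp add: le_diff_eq)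
    then show ?thesis
      using least[of z2 "s (z1 + z2) - s z1"] by (simp add: le_diff_eq add.commute)
  qed
  have homogeneous_le: "t * s z \<le> s (t *\<^sub>R z)" if "t > 0" for t z
  proof -
    have "v \<le> s (t *\<^sub>R z) / t" if "(z, v) \<in> K" for v
      using upper[OF scale[OF that, of t]] \<open>t > 0\<close> by (simp add: le_divide_eq mult.commute)
    then show ?thesis
      using least[of z "s (t *\<^sub>R z) / t"] \<open>t > 0\<close> by (simp add: le_divide_eq mult.commute)
  qed
  have "s (t *\<^sub>R z) = t * s z" if "t > 0" for t z
    using homogeneous_le[OF that, of z] homogeneous_le[of "1 / t" "t *\<^sub>R z"] that
    by (simp add: field_simps)
  then show ?thesis
    using superadditive unfolding sublinear_def s_def[symmetric] by (simp add: algebra_simps)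
qed

theorem linear_majorant_of_convex_cone:
  fixes K :: "('a::real_vector \<times> real) set"
  assumes "convex K" and "cone K" and "fst ` K = UNIV"
    and "\<And>v. (0, v) \<in> K \<Longrightarrow> v \<le> 0"
  obtains g where "linear g" and "\<And>z v. (z, v) \<in> K \<Longrightarrow> v \<le> g z"
proof -
  obtain L where L: "linear L" "\<And>z. L z \<le> - Sup {v. (z, v) \<in> K}"
    using hahn_banach_sublinear[OF sublinear_neg_Sup_convex_cone[OF assms]] by blast
  have "v \<le> - L z" if "(z, v) \<in> K" for z v
  proof -
    have "v \<le> Sup {v. (z, v) \<in> K}"
      using that bdd_above_convex_cone_fibre[OF assms] by (intro cSup_upper) auto
    then show ?thesis
      using L(2)[of z] by simp
  qed
  moreover have "linear (\<lambda>z. - L z)"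
    using L(1) by (rule linear_compose_neg)
  ultimately show thesis
    using that by blast
qed

lemma convex_differences_with_values:
  fixes f :: "'a::real_vector \<Rightarrow> 'b::real_vector"
  assumes "convex S" and "convex T" and "linear f"
  shows "convex {(a - b, f (a - c)) | a b. a \<in> S \<and> b \<in> T}"
proof (rule convexI)
  fix u v :: real and p q
  assume "p \<in> {(a - b, f (a - c)) | a b. a \<in> S \<and> b \<in> T}" "q \<in> {(a - b, f (a - c)) | a b. a \<in> S \<and> b \<in> T}"
    and uv: "0 \<le> u" "0 \<le> v" "u + v = 1"
  then obtain a1 b1 a2 b2 where ab: "a1 \<in> S" "b1 \<in> T" "a2 \<in> S" "b2 \<in> T"
    and pq: "p = (a1 - b1, f (a1 - c))" "q = (a2 - b2, f (a2 - c))"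
    by blast
  define a where "a = u *\<^sub>R a1 + v *\<^sub>R a2"
  define b where "b = u *\<^sub>R b1 + v *\<^sub>R b2"
  have "a \<in> S" "b \<in> T"
    unfolding a_def b_def using ab uv assms(1,2) by (auto intro: convexD)
  moreover have "u *\<^sub>R (a1 - b1) + v *\<^sub>R (a2 - b2) = a - b"
    by (simp add: a_def b_def algebra_simps)
  moreover have "u *\<^sub>R (a1 - c) + v *\<^sub>R (a2 - c) = a - c"
    using uv by (simp add: a_def algebra_simps flip: scaleR_add_left)
  ultimately have "u *\<^sub>R p + v *\<^sub>R q = (a - b, f (a - c))"
    using pq linear_add[OF assms(3)] linear_scale[OF assms(3)] by (metis scaleR_Pair add_Pair)
  then show "u *\<^sub>R p + v *\<^sub>R q \<in> {(a - b, f (a - c)) | a b. a \<in> S \<and> b \<in> T}"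
    using \<open>a \<in> S\<close> \<open>b \<in> T\<close> by blast
qed

lemma cone_hull_eq_UNIV_if_zero_in_interior:
  fixes S :: "'a::real_normed_vector set"
  assumes "0 \<in> interior S"
  shows "cone hull S = UNIV"
proof -
  obtain r where "r > 0" and ball: "ball 0 r \<subseteq> S"
    using assms mem_interior by blast
  have "z \<in> cone hull S" for z
  proof (cases "z = 0")
    case True
    then show ?thesis
      using \<open>r > 0\<close> ball cone_hull_contains_0 by fastforce
  next
    case False
    define c where "c = 2 * norm z / r"
    have "c > 0"
      using False \<open>r > 0\<close> by (simp add: c_def)
    have "(1 / c) *\<^sub>R z \<in> S"
      using ball \<open>r > 0\<close> False by (auto simp: c_def)
    moreover have "z = c *\<^sub>R ((1 / c) *\<^sub>R z)"
      using \<open>c > 0\<close> by simp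
    ultimately show ?thesis
      using \<open>c > 0\<close> mem_cone_hull by (metis less_imp_le)
  qed
  then show ?thesis
    by blast
qed

lemma bounded_linear_if_bounded_below_on_ball:
  fixes g :: "'a::real_normed_vector \<Rightarrow> real"
  assumes "linear g" and "r > 0" and below: "\<And>w. norm w < r \<Longrightarrow> - C \<le> g w"
  shows "bounded_linear g"
proof -
  have abs_le: "\<bar>g w\<bar> \<le> C" if "norm w < r" for w
    using below[OF that] below[of "- w"] that linear_neg[OF assms(1), of w] by simp
  have "norm (g x) \<le> norm x * (2 * C / r)" for x
  proof (cases "x = 0")
    case True
    then show ?thesis
      using linear_0[OF assms(1)] by simp
  next
    case False
    define w where "w = (r / (2 * norm x)) *\<^sub>R x"
    have "norm w < r"
      using False \<open>r > 0\<close> by (simp add: w_def)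
    have "g x = (2 * norm x / r) * g w"
      using False \<open>r > 0\<close> linear_scale[OF assms(1)] by (simp add: w_def)
    then have "\<bar>g x\<bar> = (2 * norm x / r) * \<bar>g w\<bar>"
      using \<open>r > 0\<close> by (simp add: abs_mult)
    also have "\<dots> \<le> (2 * norm x / r) * C"
      using abs_le[OF \<open>norm w < r\<close>] \<open>r > 0\<close> by (intro mult_left_mono) auto
    finally show ?thesis
      by (simp add: mult.assoc mult.left_commute)
  qed
  then show ?thesis
    using assms(1) by (intro bounded_linear_intro[where K = "2 * C / r"]) (auto simp: linear_add linear_scale)
qed

lemma linear_majorant_of_normal_functional:
  fixes xs :: "'a::real_normed_vector \<Rightarrow> real"
  assumes "convex \<Omega>1" and "convex \<Omega>2" and "linear xs"
    and normal: "\<And>x. x \<in> \<Omega>1 \<inter> \<Omega>2 \<Longrightarrow> xs (x - xbar) \<le> 0"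
    and absorbing: "cone hull {a - b | a b. a \<in> \<Omega>1 \<and> b \<in> \<Omega>2} = UNIV"
  obtains g where "linear g" and "\<And>a b. a \<in> \<Omega>1 \<Longrightarrow> b \<in> \<Omega>2 \<Longrightarrow> xs (a - xbar) \<le> g (a - b)"
proof -
  define D where "D = {(a - b, xs (a - xbar)) | a b. a \<in> \<Omega>1 \<and> b \<in> \<Omega>2}"
  have convex: "convex (cone hull D)"
    unfolding D_def using assms(1-3) by (intro convex_cone_hull convex_differences_with_values)
  have cone: "cone (cone hull D)"
    by (rule cone_cone_hull)
  have onto: "fst ` (cone hull D) = UNIV"
  proof -
    have "z \<in> fst ` (cone hull D)" for z
    proof -
      obtain c a b where "c \<ge> 0" "a \<in> \<Omega>1" "b \<in> \<Omega>2" "z = c *\<^sub>R (a - b)"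
        using absorbing by (auto simp: cone_hull_expl set_eq_iff) blast
      then have "(z, c * xs (a - xbar)) \<in> cone hull D"
        using mem_cone_hull[of "(a - b, xs (a - xbar))" D c] by (auto simp: D_def)
      then show ?thesis
        by force
    qed
    then show ?thesis
      by blast
  qed
  have nonpos: "v \<le> 0" if zero_v: "(0, v) \<in> cone hull D" for v
  proof -
    obtain c d where "c \<ge> 0" "d \<in> D" "(0, v) = c *\<^sub>R d"
      using zero_v unfolding cone_hull_expl by blast
    moreover obtain a b where "a \<in> \<Omega>1" "b \<in> \<Omega>2" "d = (a - b, xs (a - xbar))"
      using \<open>d \<in> D\<close> unfolding D_def by blast
    ultimately have "c \<ge> 0" "a \<in> \<Omega>1" "b \<in> \<Omega>2" "c = 0 \<or> a = b" "v = c * xs (a - xbar)"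
      by auto
    then show ?thesis
      using normal[of a] by (cases "c = 0") (auto simp: mult_nonneg_nonpos)
  qed
  obtain g where "linear g" and below: "\<And>z v. (z, v) \<in> cone hull D \<Longrightarrow> v \<le> g z"
    using linear_majorant_of_convex_cone[OF convex cone onto nonpos] by blast
  moreover have "xs (a - xbar) \<le> g (a - b)" if "a \<in> \<Omega>1" "b \<in> \<Omega>2" for a b
    using that by (intro below hull_inc) (auto simp: D_def)
  ultimately show thesis
    using that by blast
qed

lemma bounded_linear_majorant_of_normal_functional:
  fixes xs g :: "'a::real_normed_vector \<Rightarrow> real"
  assumes "bounded_linear xs" and "linear g" and "bounded V"
    and majorant: "\<And>a b. a \<in> \<Omega>1 \<Longrightarrow> b \<in> \<Omega>2 \<Longrightarrow> xs (a - xbar) \<le> g (a - b)"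
    and "0 \<in> interior {a - b | a b. a \<in> \<Omega>1 \<and> b \<in> \<Omega>2 \<inter> V}"
  shows "bounded_linear g"
proof -
  obtain K where "K > 0" and K: "\<And>x. norm (xs x) \<le> norm x * K"
    using bounded_linear.pos_bounded[OF assms(1)] by blast
  obtain r where "r > 0" and ball: "ball 0 r \<subseteq> {a - b | a b. a \<in> \<Omega>1 \<and> b \<in> \<Omega>2 \<inter> V}"
    using assms(5) mem_interior by blast
  obtain M where M: "\<And>b. b \<in> V \<Longrightarrow> norm (b - xbar) \<le> M"
    using bounded_any_center[of V xbar] assms(3) by (metis dist_norm norm_minus_commute)
  have "- ((r + M) * K) \<le> g w" if "norm w < r" for w
  proof -
    obtain a b where "a \<in> \<Omega>1" "b \<in> \<Omega>2" "b \<in> V" "w = a - b"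
      using ball \<open>norm w < r\<close> by auto
    then have "xs w + xs (b - xbar) \<le> g w"
      using majorant[of a b] linear_add[OF bounded_linear.linear[OF assms(1)], of w "b - xbar"] by simp
    moreover have "\<bar>xs w\<bar> \<le> r * K" "\<bar>xs (b - xbar)\<bar> \<le> M * K"
      using K[of w] K[of "b - xbar"] M[OF \<open>b \<in> V\<close>] \<open>norm w < r\<close> \<open>K > 0\<close>
      by (auto intro: order_trans mult_right_mono)
    ultimately show ?thesis
      by (simp add: algebra_simps)
  qed
  then show ?thesis
    using \<open>r > 0\<close> assms(2) bounded_linear_if_bounded_below_on_ball by blast
qed

lemma normal_cone_add_subset:
  "{(\<lambda>x. f x + g x) | f g. f \<in> normal_cone xbar \<Omega>1 \<and> g \<in> normal_cone xbar \<Omega>2}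
     \<subseteq> normal_cone xbar (\<Omega>1 \<inter> \<Omega>2)"
  by (auto simp: normal_cone_def bounded_linear_add intro: add_nonpos_nonpos)

lemma normal_cone_Int_subset_add:
  fixes \<Omega>1 \<Omega>2 V :: "'a::real_normed_vector set"
  assumes "convex \<Omega>1" and "convex \<Omega>2" and "xbar \<in> \<Omega>1 \<inter> \<Omega>2" and "bounded V"
    and qualification: "0 \<in> interior {a - b | a b. a \<in> \<Omega>1 \<and> b \<in> \<Omega>2 \<inter> V}"
  shows "normal_cone xbar (\<Omega>1 \<inter> \<Omega>2)
     \<subseteq> {(\<lambda>x. f x + g x) | f g. f \<in> normal_cone xbar \<Omega>1 \<and> g \<in> normal_cone xbar \<Omega>2}"
proof
  fix xs assume "xs \<in> normal_cone xbar (\<Omega>1 \<inter> \<Omega>2)"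
  then have xs: "bounded_linear xs" "\<And>x. x \<in> \<Omega>1 \<inter> \<Omega>2 \<Longrightarrow> xs (x - xbar) \<le> 0"
    by (auto simp: normal_cone_def)
  have "interior {a - b | a b. a \<in> \<Omega>1 \<and> b \<in> \<Omega>2 \<inter> V} \<subseteq> interior {a - b | a b. a \<in> \<Omega>1 \<and> b \<in> \<Omega>2}"
    by (intro interior_mono) blast
  then have "cone hull {a - b | a b. a \<in> \<Omega>1 \<and> b \<in> \<Omega>2} = UNIV"
    using qualification by (intro cone_hull_eq_UNIV_if_zero_in_interior) blast
  then obtain g where "linear g" and majorant: "\<And>a b. a \<in> \<Omega>1 \<Longrightarrow> b \<in> \<Omega>2 \<Longrightarrow> xs (a - xbar) \<le> g (a - b)"
    using linear_majorant_of_normal_functional[OF assms(1,2) bounded_linear.linear[OF xs(1)] xs(2)] by blast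
  have "bounded_linear g"
    using bounded_linear_majorant_of_normal_functional[OF xs(1) \<open>linear g\<close> assms(4) majorant qualification] .
  have "g (b - xbar) \<le> 0" if "b \<in> \<Omega>2" for b
  proof -
    have "xs (xbar - xbar) \<le> g (xbar - b)"
      using majorant[of xbar b] assms(3) that by blast
    then show ?thesis
      using linear_neg[OF \<open>linear g\<close>, of "b - xbar"] linear_0[OF bounded_linear.linear[OF xs(1)]]
      by simp
  qed
  then have "g \<in> normal_cone xbar \<Omega>2"
    using \<open>bounded_linear g\<close> by (simp add: normal_cone_def)
  moreover have "(\<lambda>x. xs x - g x) \<in> normal_cone xbar \<Omega>1"
    using bounded_linear_sub[OF xs(1) \<open>bounded_linear g\<close>] majorant assms(3)
    by (auto simp: normal_cone_def)
  ultimately show "xs \<in> {(\<lambda>x. f x + g x) | f g. f \<in> normal_cone xbar \<Omega>1 \<and> g \<in> normal_cone xbar \<Omega>2}"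
    by (intro CollectI exI[of _ "\<lambda>x. xs x - g x"] exI[of _ g]) simp
qed

theorem theorem3p1:
  fixes \<Omega>1 \<Omega>2 V :: "'a::real_normed_vector set" and xbar :: 'a
  assumes "convex \<Omega>1" and "convex \<Omega>2"
    and "xbar \<in> \<Omega>1 \<inter> \<Omega>2"
    and "bounded V" and "convex V" and "xbar \<in> interior V"
    and "0 \<in> interior {a - b | a b. a \<in> \<Omega>1 \<and> b \<in> \<Omega>2 \<inter> V}"
  shows "normal_cone xbar (\<Omega>1 \<inter> \<Omega>2) =
           {(\<lambda>x. f x + g x) | f g. f \<in> normal_cone xbar \<Omega>1 \<and> g \<in> normal_cone xbar \<Omega>2}"
  using normal_cone_Int_subset_add[OF assms(1-4,7)] normal_cone_add_subset by (rule equalityI)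

end
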